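(* Let $g\in\Lambda_*$. There is a constant $C$ such that for every triple $a<x<b$ of real numbers, \[\frac{(g(x)-g(a))^2}{x-a}+\frac{(g(x)-g(b))^2}{b-x}\le\frac{(g(b)-g(a))^2}{b-a}+C(b-a).\] Consequently, for every bounded interval $[a,b]$ there is $C'$ such that for every partition $a=x_0<\dots<x_N=b$, $\sum_{j=1}^N\frac{|g(x_j)-g(x_{j-1})|^2}{x_j-x_{j-1}}\le C'\log(N+1)$.
   Context: The Zygmund class $\Lambda_*$ consists of continuous $g\colon\mathbb{R}\to\mathbb{R}$ for which there is $M>0$ with $|g(x+h)-2g(x)+g(x-h)|\le 2Mh$ for all $x\in\mathbb{R}$, $h>0$. *)

theory Defs
  imports Complex_Main
begin

definition zygmund :: "(real \<Rightarrow> real) \<Rightarrow> bool" where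
  "zygmund g \<longleftrightarrow> continuous_on UNIV g \<and>
     (\<exists>M>0. \<forall>x h. h > 0 \<longrightarrow> \<bar>g (x + h) - 2 * g x + g (x - h)\<bar> \<le> 2 * M * h)"

end

theory Submission imports Defs begin

(* For a < x < b put u = x - a, v = b - x, A = g x - g a, B = g b - g x.  The algebraic identity
     A^2/u + B^2/v = (A+B)^2/(u+v) + (v*A - u*B)^2/(u*v*(u+v))
   reduces the three-point inequality to the bound (v*A - u*B)^2 <= C*u*v*(b-a)^2.  Now
   v*A - u*B = (b-a) * D, where D is the deviation of g at x from its chord over [a,b].
   For Zygmund functions a maximum-principle argument bounds chord deviations by M*(b-a), and
   halving the chord k times improves this to M*u*(k+2) when (b-a) <= 2^k*u.  Choosing k minimal
   gives D^2 <= 18*M^2*u*v when u <= v; the case u > v follows by reflecting g.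
   The second part uses only the three-point inequality: splitting a partition with N pieces
   into halves and inducting on N bounds its energy by (g b - g a)^2/(b-a) + 2*C*(b-a)*log2 N. *)

definition zygmund_bound :: "real \<Rightarrow> (real \<Rightarrow> real) \<Rightarrow> bool" where
  "zygmund_bound M g \<longleftrightarrow> (\<forall>t. isCont g t) \<and>
     (\<forall>x h. h > 0 \<longrightarrow> \<bar>g (x + h) - 2 * g x + g (x - h)\<bar> \<le> 2 * M * h)"

lemma zygmund_imp_bound: "zygmund g \<Longrightarrow> \<exists>M. zygmund_bound M g"
  unfolding zygmund_def zygmund_bound_def
  using continuous_on_eq_continuous_at[of UNIV g] by auto

lemma zygmund_bound_second_diff:
  "zygmund_bound M g \<Longrightarrow> h > 0 \<Longrightarrow> \<bar>g (x + h) - 2 * g x + g (x - h)\<bar> \<le> 2 * M * h"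
  unfolding zygmund_bound_def by blast

lemma zygmund_bound_nonneg: "zygmund_bound M g \<Longrightarrow> M \<ge> 0"
  using zygmund_bound_second_diff[of M g 1 0] by linarith

text \<open>The class is invariant under the reflection \<open>t \<mapsto> -t\<close>; this lets us assume that
  the middle point is closer to the left endpoint.\<close>
lemma zygmund_bound_reflect:
  assumes "zygmund_bound M g"
  shows "zygmund_bound M (\<lambda>t. g (- t))"
  unfolding zygmund_bound_def
proof (intro conjI allI impI)
  fix t
  have "isCont g (- t)" using assms unfolding zygmund_bound_def by simp
  then show "isCont (\<lambda>t. g (- t)) t"
    by (rule isCont_o2[where f = uminus, rotated]) (intro continuous_intros)
next
  fix x h :: real assume "h > 0"
  then have "\<bar>g (-x + h) - 2 * g (-x) + g (-x - h)\<bar> \<le> 2 * M * h"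
    by (rule zygmund_bound_second_diff[OF assms])
  moreover have "- (x + h) = -x - h" "- (x - h) = -x + h" by simp_all
  ultimately show "\<bar>g (- (x + h)) - 2 * g (- x) + g (- (x - h))\<bar> \<le> 2 * M * h"
    by (simp only:)
qed

text \<open>At a maximiser \<open>x\<close> of \<open>|\<phi>|\<close> take \<open>h\<close> the distance to the nearer endpoint.\<close>
lemma vanishing_endpoints_bound:
  fixes \<phi> :: "real \<Rightarrow> real"
  assumes ab: "a \<le> b" and cont: "continuous_on {a..b} \<phi>"
    and ends: "\<phi> a = 0" "\<phi> b = 0" and "M \<ge> 0"
    and second_diff: "\<And>x h. h > 0 \<Longrightarrow> a \<le> x - h \<Longrightarrow> x + h \<le> b \<Longrightarrow>
        \<bar>\<phi> (x + h) - 2 * \<phi> x + \<phi> (x - h)\<bar> \<le> 2 * M * h"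
    and t: "t \<in> {a..b}"
  shows "\<bar>\<phi> t\<bar> \<le> M * (b - a)"
proof -
  obtain x where x: "x \<in> {a..b}" and max: "\<And>s. s \<in> {a..b} \<Longrightarrow> \<bar>\<phi> s\<bar> \<le> \<bar>\<phi> x\<bar>"
    using continuous_attains_sup[OF compact_Icc _ continuous_on_rabs[OF cont]] ab by auto
  define h where "h = min (x - a) (b - x)"
  have "\<bar>\<phi> x\<bar> \<le> M * (b - a)"
  proof (cases "h = 0")
    case True
    then have "x = a \<or> x = b" using x by (auto simp: h_def min_def split: if_splits)
    then show ?thesis using ends ab \<open>M \<ge> 0\<close> by auto
  next
    case False
    then have h: "h > 0" "a \<le> x - h" "x + h \<le> b" using x by (auto simp: h_def)
    have endpoint: "\<phi> (x - h) = 0 \<or> \<phi> (x + h) = 0"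
      using ends by (auto simp: h_def min_def)
    have "\<bar>\<phi> (x + h)\<bar> \<le> \<bar>\<phi> x\<bar>" "\<bar>\<phi> (x - h)\<bar> \<le> \<bar>\<phi> x\<bar>"
      using h x by (auto intro!: max)
    with endpoint second_diff[OF h] have "\<bar>\<phi> x\<bar> \<le> 2 * M * h" by linarith
    also have "\<dots> = M * (2 * h)" by simp
    also have "\<dots> \<le> M * (b - a)"
      using \<open>M \<ge> 0\<close> by (intro mult_left_mono) (simp_all add: h_def min_def)
    finally show ?thesis .
  qed
  then show ?thesis using max[OF t] by linarith
qed

definition chord_dev :: "(real \<Rightarrow> real) \<Rightarrow> real \<Rightarrow> real \<Rightarrow> real \<Rightarrow> real" where
  "chord_dev g a L u = g (a + u) - g a - u / L * (g (a + L) - g a)"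

lemma chord_dev_le:
  assumes Z: "zygmund_bound M g" and "L > 0" and "0 \<le> u" "u \<le> L"
  shows "\<bar>chord_dev g a L u\<bar> \<le> M * L"
proof -
  have "\<bar>chord_dev g a L (t - a)\<bar> \<le> M * (a + L - a)" if "t \<in> {a..a+L}" for t
  proof (rule vanishing_endpoints_bound[where \<phi> = "\<lambda>t. chord_dev g a L (t - a)"])
    show "continuous_on {a..a + L} (\<lambda>t. chord_dev g a L (t - a))"
      using Z \<open>L > 0\<close> unfolding chord_dev_def zygmund_bound_def
      by (intro continuous_at_imp_continuous_on ballI continuous_intros) auto
  next
    fix x h :: real assume "h > 0"
    moreover have "chord_dev g a L (x + h - a) - 2 * chord_dev g a L (x - a) + chord_dev g a L (x - h - a)
        = g (x + h) - 2 * g x + g (x - h)"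
      using \<open>L > 0\<close> unfolding chord_dev_def by (simp add: field_simps)
    ultimately show "\<bar>chord_dev g a L (x + h - a) - 2 * chord_dev g a L (x - a) + chord_dev g a L (x - h - a)\<bar>
        \<le> 2 * M * h"
      using zygmund_bound_second_diff[OF Z] by metis
  qed (use assms that zygmund_bound_nonneg[OF Z] in \<open>auto simp: chord_dev_def\<close>)
  from this[of "a + u"] show ?thesis using assms by simp
qed

text \<open>Halving the chord changes the deviation at a fixed point \<open>a + u\<close> by at most \<open>M u\<close>;
  iterating, chord deviations grow only logarithmically in \<open>L / u\<close>.\<close>
lemma chord_dev_dyadic:
  assumes Z: "zygmund_bound M g"
  shows "0 < u \<Longrightarrow> u \<le> L \<Longrightarrow> L \<le> 2^k * u \<Longrightarrow> \<bar>chord_dev g a L u\<bar> \<le> M * u * (real k + 2)"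
proof (induction k arbitrary: L)
  case 0
  then show ?case using chord_dev_le[OF Z, of L u a] by simp
next
  case (Suc k)
  have M: "M \<ge> 0" using zygmund_bound_nonneg[OF Z] .
  show ?case
  proof (cases "L \<le> 2 * u")
    case True
    have "\<bar>chord_dev g a L u\<bar> \<le> M * L" using chord_dev_le[OF Z] Suc.prems by simp
    also have "\<dots> \<le> M * (u * (real (Suc k) + 2))"
    proof (intro mult_left_mono[OF _ M])
      have "0 \<le> u * real k" using Suc.prems by simp
      moreover have "u * (real (Suc k) + 2) = u * real k + 3 * u" by (simp add: algebra_simps)
      ultimately show "L \<le> u * (real (Suc k) + 2)" using True Suc.prems by linarith
    qed
    finally show ?thesis by (simp add: mult.assoc)
  next
    case False
    have IH: "\<bar>chord_dev g a (L/2) u\<bar> \<le> M * u * (real k + 2)"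
      using Suc.IH[of "L/2"] Suc.prems False by simp
    have L: "L > 0" using Suc.prems by simp
    have "\<bar>g (a + L/2 + L/2) - 2 * g (a + L/2) + g (a + L/2 - L/2)\<bar> \<le> 2 * M * (L/2)"
      using L by (intro zygmund_bound_second_diff[OF Z]) simp
    then have second: "\<bar>g (a + L) - 2 * g (a + L/2) + g a\<bar> \<le> M * L" by (simp add: add.commute)
    have "chord_dev g a (L/2) u - chord_dev g a L u = (u / L) * (g (a + L) - 2 * g (a + L/2) + g a)"
      using L unfolding chord_dev_def by (simp add: field_simps)
    also have "\<bar>\<dots>\<bar> = (u / L) * \<bar>g (a + L) - 2 * g (a + L/2) + g a\<bar>"
      using L Suc.prems by (simp add: abs_mult)
    also have "\<dots> \<le> (u / L) * (M * L)"
      using second L Suc.prems by (intro mult_left_mono) simp_all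
    also have "\<dots> = M * u" using L by simp
    finally have "\<bar>chord_dev g a (L/2) u - chord_dev g a L u\<bar> \<le> M * u" .
    with IH have "\<bar>chord_dev g a L u\<bar> \<le> M * u * (real k + 2) + M * u" by arith
    then show ?thesis by (simp add: algebra_simps)
  qed
qed

text \<open>Converts the logarithmic factor \<open>k + 2\<close> of the dyadic bound into a power of two.\<close>
lemma square_le_pow2: "(real j + 3)^2 \<le> 9 * 2^j"
proof (induction j)
  case (Suc j)
  have "(real (Suc j) + 3)^2 \<le> 2 * (real j + 3)^2"
    by (simp add: power2_eq_square algebra_simps)
  then show ?case using Suc by simp
qed simp

lemma dyadic_scale_exists:
  fixes u L :: real
  assumes "0 < u" "u < L"
  obtains j where "2^j * u < L" "L \<le> 2^Suc j * u"
proof -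
  obtain n where "L / u < 2^n" using real_arch_pow[of 2 "L/u"] by auto
  then have ex: "L \<le> 2^n * u" using assms by (simp add: field_simps)
  define k where "k = (LEAST k. L \<le> 2^k * u)"
  have k: "L \<le> 2^k * u" unfolding k_def by (rule LeastI[of "\<lambda>k. L \<le> 2^k * u", OF ex])
  then obtain j where j: "k = Suc j" using assms by (cases k) auto
  have "\<not> L \<le> 2^j * u" by (rule not_less_Least) (simp add: j flip: k_def)
  then show ?thesis using k j by (intro that) auto
qed

text \<open>The chord deviation at a point nearer to the left end: \<open>D^2 \<le> 18 M^2 u v\<close>.
  Written with cleared denominators this is the bound on \<open>v A - u B\<close> needed below.\<close>
lemma chord_defect_sq_le:
  assumes Z: "zygmund_bound M g" and "a < x" "x < b" and near: "x - a \<le> b - x"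
  shows "((b-a)*g x - (b-x)*g a - (x-a)*g b)^2 \<le> 18*M^2*(x-a)*(b-x)*(b-a)^2"
proof -
  define u v L where "u = x - a" and "v = b - x" and "L = b - a"
  have u: "u > 0" "u < L" "L \<le> 2 * v" using assms by (auto simp: u_def v_def L_def)
  obtain j where j: "2^j * u < L" "L \<le> 2^Suc j * u" using dyadic_scale_exists[OF u(1,2)] .
  define D where "D = chord_dev g a L u"
  have "\<bar>D\<bar> \<le> M * u * (real j + 3)"
    using chord_dev_dyadic[OF Z, of u L "Suc j" a] u j by (simp add: D_def add.commute)
  then have "D^2 \<le> (M * u * (real j + 3))^2"
    by (metis abs_ge_zero order_trans power2_abs power_mono)
  also have "\<dots> = M^2 * u^2 * (real j + 3)^2" by (simp add: power_mult_distrib)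
  also have "\<dots> \<le> M^2 * u^2 * (9 * 2^j)" by (intro mult_left_mono square_le_pow2) simp
  also have "\<dots> = 9 * M^2 * u * (2^j * u)" by (simp add: power2_eq_square)
  also have "\<dots> \<le> 9 * M^2 * u * (2 * v)" using j u by (intro mult_left_mono) auto
  finally have bound: "D^2 \<le> 18 * M^2 * u * v" by simp
  have "(b-a)*g x - (b-x)*g a - (x-a)*g b = L * D"
    using u unfolding D_def chord_dev_def u_def v_def L_def by (simp add: field_simps)
  then have "((b-a)*g x - (b-x)*g a - (x-a)*g b)^2 = L^2 * D^2" by (simp add: power_mult_distrib)
  also have "\<dots> \<le> L^2 * (18 * M^2 * u * v)" using bound by (intro mult_left_mono) auto
  finally show ?thesis by (simp add: u_def v_def L_def mult_ac)
qed

lemma three_point_identity: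
  fixes u v A B :: real
  assumes "u > 0" "v > 0"
  shows "A^2/u + B^2/v = (A+B)^2/(u+v) + (v*A - u*B)^2/(u*v*(u+v))"
proof -
  have "u + v \<noteq> 0" "u \<noteq> 0" "v \<noteq> 0" using assms by auto
  then show ?thesis
    by (simp add: divide_simps) (simp add: power2_eq_square algebra_simps)
qed

lemma zygmund_three_point:
  assumes "zygmund g"
  shows "\<exists>C\<ge>0. \<forall>a x b. a < x \<and> x < b \<longrightarrow>
            (g x - g a)^2 / (x - a) + (g x - g b)^2 / (b - x)
              \<le> (g b - g a)^2 / (b - a) + C * (b - a)"
proof -
  obtain M where Z: "zygmund_bound M g" using zygmund_imp_bound[OF assms] by auto
  show ?thesis
  proof (intro exI[of _ "18 * M^2"] conjI allI impI)
    fix a x b :: real assume axb: "a < x \<and> x < b"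
    define u v E where "u = x - a" and "v = b - x" and "E = (b-a)*g x - (b-x)*g a - (x-a)*g b"
    have uv: "u > 0" "v > 0" "u + v = b - a" using axb by (auto simp: u_def v_def)
    have "E^2 \<le> 18*M^2*u*v*(b-a)^2"
    proof (cases "x - a \<le> b - x")
      case True
      then show ?thesis using chord_defect_sq_le[OF Z, of a x b] axb by (simp add: E_def u_def v_def)
    next
      case False
      then show ?thesis
        using chord_defect_sq_le[OF zygmund_bound_reflect[OF Z], of "-b" "-x" "-a"] axb
        by (simp add: E_def u_def v_def algebra_simps)
    qed
    then have defect: "E^2 / (u * v * (b - a)) \<le> 18 * M^2 * (b - a)"
      using uv by (simp add: divide_le_eq power2_eq_square mult_ac)
    have "(g x - g a)^2 / (x - a) + (g x - g b)^2 / (b - x)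
        = (g x - g a)^2 / u + (g b - g x)^2 / v"
      by (simp add: u_def v_def power2_commute[of "g x" "g b"])
    also have "\<dots> = (g b - g a)^2 / (b - a) + E^2 / (u * v * (b - a))"
      using three_point_identity[OF uv(1,2), of "g x - g a" "g b - g x"] uv(3)
      by (simp add: E_def u_def v_def algebra_simps)
    finally show "(g x - g a)^2 / (x - a) + (g x - g b)^2 / (b - x)
              \<le> (g b - g a)^2 / (b - a) + 18 * M^2 * (b - a)" using defect by linarith
  qed simp
qed

lemma strictly_increasing_between:
  fixes y :: "nat \<Rightarrow> real"
  assumes "\<forall>j. m \<le> j \<and> j < n \<longrightarrow> y j < y (Suc j)"
  shows "m \<le> i \<Longrightarrow> i < i' \<Longrightarrow> i' \<le> n \<Longrightarrow> y i < y i'"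
proof (induction i')
  case (Suc k)
  show ?case
  proof (cases "i = k")
    case False
    then have "y i < y k" "y k < y (Suc k)" using Suc assms by auto
    then show ?thesis by linarith
  qed (use assms Suc.prems in auto)
qed simp

text \<open>Splitting \<open>d\<close> pieces into halves of sizes \<open>\<lfloor>d/2\<rfloor>\<close> and \<open>r = \<lceil>d/2\<rceil>\<close>:
  \<open>2 r^2 \<le> d^2\<close>, i.e. \<open>1 + 2 log2 r \<le> 2 log2 d\<close>.\<close>
lemma ceiling_half_sq_le:
  assumes "(d::nat) \<ge> 2"
  shows "2 * (d - d div 2)^2 \<le> d^2"
proof (cases "even d")
  case True
  then obtain q where "d = 2 * q" by blast
  then show ?thesis by (simp add: power2_eq_square)
next
  case False
  then obtain q where d: "d = 2 * q + 1" using oddE by blast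
  then have "q \<ge> 1" using assms by simp
  then have "1 \<le> 2 * q * q" by (simp add: Suc_le_eq)
  then show ?thesis using d by (simp add: power2_eq_square algebra_simps)
qed

lemma partition_energy_bound:
  fixes g :: "real \<Rightarrow> real" and C :: real
  assumes C: "C \<ge> 0"
    and three_point: "\<forall>a x b. a < x \<and> x < b \<longrightarrow>
            (g x - g a)^2 / (x - a) + (g x - g b)^2 / (b - x)
              \<le> (g b - g a)^2 / (b - a) + C * (b - a)"
  shows "d \<ge> 1 \<Longrightarrow> (\<forall>j. m \<le> j \<and> j < m + d \<longrightarrow> y j < y (Suc j)) \<Longrightarrow>
    (\<Sum>j=m+1..m+d. (g (y j) - g (y (j - 1)))^2 / (y j - y (j - 1)))
      \<le> (g (y (m+d)) - g (y m))^2 / (y (m+d) - y m) + C * (y (m+d) - y m) * (2 * log 2 (real d))"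
proof (induction d arbitrary: m rule: less_induct)
  case (less d)
  show ?case
  proof (cases "d = 1")
    case False
    define k r where "k = d div 2" and "r = d - d div 2"
    have kr: "k \<ge> 1" "k < d" "r < d" "k \<le> r" "d = k + r"
      using False less.prems unfolding k_def r_def by auto
    let ?f = "\<lambda>j. (g (y j) - g (y (j - 1)))^2 / (y j - y (j - 1))"
    define a x b where "a = y m" and "x = y (m+k)" and "b = y (m+d)"
    have "a < x" "x < b"
      using strictly_increasing_between[OF less.prems(2), of m "m+k"]
        strictly_increasing_between[OF less.prems(2), of "m+k" "m+d"] kr
      by (auto simp: a_def x_def b_def)
    have left: "(\<Sum>j=m+1..m+k. ?f j) \<le> (g x - g a)^2 / (x - a) + C * (x - a) * (2 * log 2 (real k))"
      using less.IH[of k m] less.prems kr by (auto simp: a_def x_def)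
    have right: "(\<Sum>j=m+k+1..m+k+r. ?f j) \<le> (g b - g x)^2 / (b - x) + C * (b - x) * (2 * log 2 (real r))"
      using less.IH[of r "m+k"] less.prems kr by (auto simp: x_def b_def add.assoc)
    have "C * (x - a) * (2 * log 2 (real k)) \<le> C * (x - a) * (2 * log 2 (real r))"
      using kr C \<open>a < x\<close> by (intro mult_left_mono) auto
    moreover have "(\<Sum>j=m+1..m+d. ?f j) = (\<Sum>j=m+1..m+k. ?f j) + (\<Sum>j=m+k+1..m+k+r. ?f j)"
      using sum.ub_add_nat[of "m+1" "m+k" ?f r] kr by (simp add: add.assoc)
    moreover have "(g x - g a)^2 / (x - a) + (g b - g x)^2 / (b - x)
        \<le> (g b - g a)^2 / (b - a) + C * (b - a)"
      using three_point[rule_format, of a x b] \<open>a < x\<close> \<open>x < b\<close>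
      by (simp only: power2_commute[of "g x" "g b"])
    ultimately have "(\<Sum>j=m+1..m+d. ?f j) \<le>
        (g b - g a)^2 / (b - a) + C * (b - a) + C * (x - a) * (2 * log 2 (real r))
          + C * (b - x) * (2 * log 2 (real r))"
      using left right by linarith
    also have "\<dots> = (g b - g a)^2 / (b - a) + C * (b - a) * (1 + 2 * log 2 (real r))"
      by (simp add: algebra_simps)
    also have "1 + 2 * log 2 (real r) \<le> 2 * log 2 (real d)"
    proof -
      have "real (2 * r^2) \<le> real (d^2)"
        using ceiling_half_sq_le[of d] kr unfolding r_def of_nat_le_iff by simp
      then have "log 2 (2 * (real r)^2) \<le> log 2 ((real d)^2)" using kr by simp
      then show ?thesis using kr by (simp add: log_mult log_nat_power)
    qed
    then have "C * (b - a) * (1 + 2 * log 2 (real r)) \<le> C * (b - a) * (2 * log 2 (real d))"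
      using C \<open>a < x\<close> \<open>x < b\<close> by (intro mult_left_mono) auto
    finally show ?thesis by (simp add: a_def b_def)
  qed simp
qed

lemma partition_energy_log_bound:
  fixes g :: "real \<Rightarrow> real" and C :: real
  assumes C: "C \<ge> 0"
    and three_point: "\<forall>a x b. a < x \<and> x < b \<longrightarrow>
            (g x - g a)^2 / (x - a) + (g x - g b)^2 / (b - x)
              \<le> (g b - g a)^2 / (b - a) + C * (b - a)"
    and ab: "a < b" and y: "y 0 = a" "y N = b" "\<forall>j<N. y j < y (Suc j)"
  shows "(\<Sum>j=1..N. \<bar>g (y j) - g (y (j - 1))\<bar>^2 / (y j - y (j - 1)))
           \<le> ((g b - g a)^2 / (b - a) + 2 * C * (b - a)) / ln 2 * ln (real N + 1)"
proof -
  define Q where "Q = (g b - g a)^2 / (b - a)"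
  have N: "N \<ge> 1" using y ab by (cases N) auto
  have "(\<Sum>j=1..N. \<bar>g (y j) - g (y (j - 1))\<bar>^2 / (y j - y (j - 1)))
      \<le> Q + C * (b - a) * (2 * log 2 (real N))"
    using partition_energy_bound[OF C three_point N, of 0 y] y by (simp add: Q_def)
  also have "\<dots> \<le> Q * log 2 (real N + 1) + 2 * C * (b - a) * log 2 (real N + 1)"
  proof -
    have "Q \<ge> 0" "2 * C * (b - a) \<ge> 0" using C ab by (auto simp: Q_def)
    moreover have "1 \<le> log 2 (real N + 1)" "log 2 (real N) \<le> log 2 (real N + 1)" using N by auto
    ultimately have "Q * 1 \<le> Q * log 2 (real N + 1)"
      "2 * C * (b - a) * log 2 (real N) \<le> 2 * C * (b - a) * log 2 (real N + 1)"
      by (intro mult_left_mono; simp)+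
    then show ?thesis by (simp add: algebra_simps)
  qed
  finally have "(\<Sum>j=1..N. \<bar>g (y j) - g (y (j - 1))\<bar>^2 / (y j - y (j - 1)))
      \<le> (Q + 2 * C * (b - a)) * log 2 (real N + 1)" by (simp add: algebra_simps)
  then show ?thesis by (simp add: Q_def log_def)
qed

theorem mainTheorem9:
  fixes g :: "real \<Rightarrow> real"
  assumes "zygmund g"
  shows "(\<exists>C. \<forall>a x b. a < x \<and> x < b \<longrightarrow>
            (g x - g a)^2 / (x - a) + (g x - g b)^2 / (b - x)
              \<le> (g b - g a)^2 / (b - a) + C * (b - a))
       \<and> (\<forall>a b. a < b \<longrightarrow> (\<exists>C'. \<forall>(N::nat) (y::nat \<Rightarrow> real).
            y 0 = a \<and> y N = b \<and> (\<forall>j<N. y j < y (Suc j)) \<longrightarrow>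
            (\<Sum>j=1..N. \<bar>g (y j) - g (y (j - 1))\<bar>^2 / (y j - y (j - 1)))
              \<le> C' * ln (real N + 1)))"
proof -
  obtain C where C: "C \<ge> 0" and three_point: "\<forall>a x b. a < x \<and> x < b \<longrightarrow>
            (g x - g a)^2 / (x - a) + (g x - g b)^2 / (b - x)
              \<le> (g b - g a)^2 / (b - a) + C * (b - a)"
    using zygmund_three_point[OF assms] by blast
  moreover have "\<exists>C'. \<forall>(N::nat) (y::nat \<Rightarrow> real).
            y 0 = a \<and> y N = b \<and> (\<forall>j<N. y j < y (Suc j)) \<longrightarrow>
            (\<Sum>j=1..N. \<bar>g (y j) - g (y (j - 1))\<bar>^2 / (y j - y (j - 1)))
              \<le> C' * ln (real N + 1)" if "a < b" for a b
    using partition_energy_log_bound[OF C three_point that] by blast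
  ultimately show ?thesis by blast
qed

end
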